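(* Let $\delta\le0.011$ and let $\mathcal{I}$ be a $\delta$-ONI instance with $n$ agents and $|N^1_1|\le n\left(\frac14-\delta\right)/\left(\frac14+\frac\delta3\right)$. Then every agent $i\in N^2$ receives a bag of value at least $\frac34+\delta$ at the end of Algorithm $\mathtt{approxMMS1}(\mathcal{I},\delta)$.
   Context: Instance: agents $[n]$, goods $[m]$, additive valuations; goods with index larger than $m$ are dummy goods of value 0. Ordered: $v_i(1)\ge\dots\ge v_i(m)$ for all $i$. Normalized: every agent $i$ has a partition of the goods into $n$ bundles each of value exactly 1 to $i$. $\alpha$-irreducible: for every $i$, $v_i(1)<\alpha$, $v_i(\{2n-1,2n,2n+1\})<\alpha$, $v_i(\{3n-2,\dots,3n+1\})<\alpha$, $v_i(\{1,2n+1\})<\alpha$. $\delta$-ONI: ordered, normalized, $(3/4+\delta)$-irreducible. $B_k=\{k,2n-k+1\}$ ($k\in[n]$); $N^1=\{i:v_i(B_k)\le1\ \forall k\}$; $N^2=[n]\setminus N^1$; $N^1_1=\{i\in N^1:v_i(2n+1)\ge\frac14-5\delta\}$. Algorithm $\mathtt{approxMMS1}(\mathcal{I},\delta)$: $\alpha=3/4+\delta$, bags $B_1,\dots,B_n$. Phase 1: while some unassigned agent $i$ and unassigned bag $B$ have $v_i(B)\ge\alpha$, assign such $B$ to an agent valuing it at least $\alpha$, choosing an agent of $N^1_1$ whenever one qualifies. Phase 2: process remaining bags one by one; for the current bag $B$, while no unassigned agent values it at least $\alpha$, add an arbitrary unused good with index $>2n$; then assign $B$ to an unassigned agent valuing it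 at least $\alpha$, preferring $N^1_1$. (If a good must be added but none is left, the algorithm stops.) *)

theory Defs
  imports Main "HOL.Real"
begin

(* Agents are 1..n, goods are 1..m; v i j is the value of good j to agent i.
   Goods with index > m are dummy goods of value 0. *)

definition val :: "(nat \<Rightarrow> nat \<Rightarrow> real) \<Rightarrow> nat \<Rightarrow> nat set \<Rightarrow> real" where
  "val v i S = (\<Sum>j\<in>S. v i j)"

definition valid_instance :: "nat \<Rightarrow> nat \<Rightarrow> (nat \<Rightarrow> nat \<Rightarrow> real) \<Rightarrow> bool" where
  "valid_instance n m v \<longleftrightarrow>
     (\<forall>i\<in>{1..n}. (\<forall>j\<in>{1..m}. 0 \<le> v i j) \<and> (\<forall>j. m < j \<longrightarrow> v i j = 0))"

definition ordered :: "nat \<Rightarrow> nat \<Rightarrow> (nat \<Rightarrow> nat \<Rightarrow> real) \<Rightarrow> bool" where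
  "ordered n m v \<longleftrightarrow>
     (\<forall>i\<in>{1..n}. \<forall>j k. 1 \<le> j \<longrightarrow> j \<le> k \<longrightarrow> k \<le> m \<longrightarrow> v i k \<le> v i j)"

definition normalized :: "nat \<Rightarrow> nat \<Rightarrow> (nat \<Rightarrow> nat \<Rightarrow> real) \<Rightarrow> bool" where
  "normalized n m v \<longleftrightarrow>
     (\<forall>i\<in>{1..n}. \<exists>P :: nat \<Rightarrow> nat set.
        (\<Union>j\<in>{1..n}. P j) = {1..m} \<and>
        (\<forall>j\<in>{1..n}. \<forall>j'\<in>{1..n}. j \<noteq> j' \<longrightarrow> P j \<inter> P j' = {}) \<and>
        (\<forall>j\<in>{1..n}. val v i (P j) = 1))"

definition irreducible :: "nat \<Rightarrow> (nat \<Rightarrow> nat \<Rightarrow> real) \<Rightarrow> real \<Rightarrow> bool" where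
  "irreducible n v \<alpha> \<longleftrightarrow>
     (\<forall>i\<in>{1..n}. v i 1 < \<alpha> \<and>
        val v i {2*n-1, 2*n, 2*n+1} < \<alpha> \<and>
        val v i {3*n-2..3*n+1} < \<alpha> \<and>
        val v i {1, 2*n+1} < \<alpha>)"

definition ONI :: "nat \<Rightarrow> nat \<Rightarrow> (nat \<Rightarrow> nat \<Rightarrow> real) \<Rightarrow> real \<Rightarrow> bool" where
  "ONI n m v \<delta> \<longleftrightarrow> valid_instance n m v \<and> ordered n m v \<and> normalized n m v \<and>
     irreducible n v (3/4 + \<delta>)"

definition Bk :: "nat \<Rightarrow> nat \<Rightarrow> nat set" where
  "Bk n k = {k, 2*n - k + 1}"

definition N1 :: "nat \<Rightarrow> (nat \<Rightarrow> nat \<Rightarrow> real) \<Rightarrow> nat set" where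
  "N1 n v = {i\<in>{1..n}. \<forall>k\<in>{1..n}. val v i (Bk n k) \<le> 1}"

definition N2 :: "nat \<Rightarrow> (nat \<Rightarrow> nat \<Rightarrow> real) \<Rightarrow> nat set" where
  "N2 n v = {1..n} - N1 n v"

definition N11 :: "nat \<Rightarrow> (nat \<Rightarrow> nat \<Rightarrow> real) \<Rightarrow> real \<Rightarrow> nat set" where
  "N11 n v \<delta> = {i\<in>N1 n v. 1/4 - 5*\<delta> \<le> v i (2*n+1)}"

(* State of approxMMS1: contents of bag k (k in 1..n), owner of bag k,
   phase flag (False = Phase 1, True = Phase 2), current bag in Phase 2. *)
record st =
  bag :: "nat \<Rightarrow> nat set"
  own :: "nat \<Rightarrow> nat option"
  ph2 :: bool
  cur :: "nat option"

definition init :: "nat \<Rightarrow> st" where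
  "init n = \<lparr>bag = Bk n, own = (\<lambda>_. None), ph2 = False, cur = None\<rparr>"

definition assigned :: "nat \<Rightarrow> st \<Rightarrow> nat \<Rightarrow> bool" where
  "assigned n s a \<longleftrightarrow> (\<exists>k\<in>{1..n}. own s k = Some a)"

definition eligible :: "nat \<Rightarrow> (nat \<Rightarrow> nat \<Rightarrow> real) \<Rightarrow> real \<Rightarrow> st \<Rightarrow> nat \<Rightarrow> nat \<Rightarrow> bool" where
  "eligible n v \<delta> s k a \<longleftrightarrow>
     a \<in> {1..n} \<and> \<not> assigned n s a \<and> 3/4 + \<delta> \<le> val v a (bag s k) \<and>
     (a \<in> N11 n v \<delta> \<or>
      \<not> (\<exists>b\<in>N11 n v \<delta>. \<not> assigned n s b \<and> 3/4 + \<delta> \<le> val v b (bag s k)))"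

(* one (nondeterministic) step of approxMMS1(I, delta) *)
inductive step :: "nat \<Rightarrow> nat \<Rightarrow> (nat \<Rightarrow> nat \<Rightarrow> real) \<Rightarrow> real \<Rightarrow> st \<Rightarrow> st \<Rightarrow> bool"
  for n m v \<delta> where
  phase1_assign:
    "\<lbrakk>\<not> ph2 s; k \<in> {1..n}; own s k = None; eligible n v \<delta> s k a\<rbrakk>
     \<Longrightarrow> step n m v \<delta> s (s\<lparr>own := (own s)(k := Some a)\<rparr>)"
| to_phase2:
    "\<lbrakk>\<not> ph2 s;
      \<not> (\<exists>k\<in>{1..n}. \<exists>a\<in>{1..n}. own s k = None \<and> \<not> assigned n s a \<and>
            3/4 + \<delta> \<le> val v a (bag s k))\<rbrakk>
     \<Longrightarrow> step n m v \<delta> s (s\<lparr>ph2 := True\<rparr>)"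
| phase2_pick:
    "\<lbrakk>ph2 s; cur s = None; k \<in> {1..n}; own s k = None\<rbrakk>
     \<Longrightarrow> step n m v \<delta> s (s\<lparr>cur := Some k\<rparr>)"
| phase2_add:
    "\<lbrakk>ph2 s; cur s = Some k;
      \<not> (\<exists>a\<in>{1..n}. \<not> assigned n s a \<and> 3/4 + \<delta> \<le> val v a (bag s k));
      2*n < g; g \<le> m; g \<notin> (\<Union>j\<in>{1..n}. bag s j)\<rbrakk>
     \<Longrightarrow> step n m v \<delta> s (s\<lparr>bag := (bag s)(k := insert g (bag s k))\<rparr>)"
| phase2_assign:
    "\<lbrakk>ph2 s; cur s = Some k; eligible n v \<delta> s k a\<rbrakk>
     \<Longrightarrow> step n m v \<delta> s (s\<lparr>own := (own s)(k := Some a), cur := None\<rparr>)"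

end

theory Submission
  imports Defs
begin

(* Fix an agent i of N^2 and suppose she is still unassigned when approxMMS1 stops. Then the
   algorithm is stuck in Phase 2 on a bag worth less than alpha = 3/4 + delta to her, all goods
   beyond 2n have been placed, and every other bag B is worth at most
   max (v_i(B_k), alpha + v_i(2n+1)) to her: either B = B_k, or B lost its last added good
   g > 2n and was then worth less than alpha to every unassigned agent. So the goods would be
   worth less than n to i, contradicting normalization, once we know that
   sum_k max (v_i(B_k), alpha + v_i(2n+1)) <= n whenever some B_k is worth more than 1.
   For that bound let lo and hi be the first and last such k. The goods 1..hi lie in distinct
   parts of i's MMS partition and the 2(n-hi)+1 goods hi+1..2n-hi+1 lie in the n-hi remaining
   parts, so by pigeonhole v_i(2n-hi+1) <= 1/3. The bags B_lo..B_hi are paid for by the rest of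
   the parts containing lo..hi, and the bags B_k with k > hi by the remaining parts. *)

lemma sum_mirror:
  fixes f :: "nat \<Rightarrow> 'a::comm_monoid_add"
  assumes "a \<le> N" and "b \<le> N"
  shows "(\<Sum>k=a..b. f (N - k + 1)) = sum f {N - b + 1..N - a + 1}"
  by (rule sum.reindex_bij_witness[of _ "\<lambda>j. N + 1 - j" "\<lambda>k. N - k + 1"]) (use assms in auto)

lemma sum_Union_plus_slack_le:
  fixes f :: "'b \<Rightarrow> real" and A B :: "'a \<Rightarrow> 'b set"
  assumes "finite I" and "\<And>i. i \<in> I \<Longrightarrow> finite (B i)" and "\<And>i. i \<in> I \<Longrightarrow> A i \<subseteq> B i"
    and "\<And>i j. i \<in> I \<Longrightarrow> j \<in> I \<Longrightarrow> i \<noteq> j \<Longrightarrow> A i \<inter> A j = {}"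
    and "\<And>i b. i \<in> I \<Longrightarrow> b \<in> B i \<Longrightarrow> 0 \<le> f b"
    and "\<And>i. i \<in> I \<Longrightarrow> t \<le> sum f (B i)" and "0 \<le> t"
  shows "sum f (\<Union>i\<in>I. A i) + t * (card I - card (\<Union>i\<in>I. A i)) \<le> (\<Sum>i\<in>I. sum f (B i))"
proof -
  define J where "J = {i\<in>I. A i \<noteq> {}}"
  have J: "J \<subseteq> I" "finite J" using assms(1) by (auto simp: J_def)
  have finA: "finite (A i)" if "i \<in> I" for i
    using assms(2,3) that by (meson finite_subset)
  have union: "(\<Union>i\<in>I. A i) = (\<Union>i\<in>J. A i)" by (auto simp: J_def)
  have disj: "\<forall>i\<in>J. \<forall>j\<in>J. i \<noteq> j \<longrightarrow> A i \<inter> A j = {}" using assms(4) J(1) by blast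
  have "card J = (\<Sum>i\<in>J. 1)" by simp
  also have "\<dots> \<le> (\<Sum>i\<in>J. card (A i))"
    using finA J(1) by (intro sum_mono) (auto simp: J_def Suc_le_eq card_gt_0_iff)
  also have "\<dots> = card (\<Union>i\<in>I. A i)"
    unfolding union using finA J by (intro card_UN_disjoint[symmetric] disj) auto
  finally have cardJ: "card J \<le> card (\<Union>i\<in>I. A i)" .
  have "sum f (\<Union>i\<in>I. A i) = (\<Sum>i\<in>J. sum f (A i))"
    unfolding union using finA J by (intro sum.UNION_disjoint disj) auto
  also have "\<dots> \<le> (\<Sum>i\<in>J. sum f (B i))"
    using assms(2,3,5) J(1) by (intro sum_mono sum_mono2) blast+
  finally have sumJ: "sum f (\<Union>i\<in>I. A i) \<le> (\<Sum>i\<in>J. sum f (B i))" .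
  have "t * (card I - card (\<Union>i\<in>I. A i)) \<le> t * card (I - J)"
    using cardJ J assms(7) by (intro mult_left_mono) (auto simp: card_Diff_subset)
  also have "\<dots> \<le> (\<Sum>i\<in>I - J. sum f (B i))"
    using sum_bounded_below[of "I - J" t "\<lambda>i. sum f (B i)"] assms(6) by (simp add: mult.commute)
  finally show ?thesis
    using sumJ sum.subset_diff[OF J(1) assms(1), of "\<lambda>i. sum f (B i)"] by simp
qed

section \<open>The counting bound for an agent of N2\<close>

(* w is one agent's valuation and P her normalized MMS partition of the goods 1..m. *)
locale ordered_partition =
  fixes n m :: nat and w :: "nat \<Rightarrow> real" and P :: "nat \<Rightarrow> nat set"
  assumes nonneg: "1 \<le> j \<Longrightarrow> 0 \<le> w j"
    and antimono: "1 \<le> j \<Longrightarrow> j \<le> k \<Longrightarrow> w k \<le> w j"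
    and zero_beyond: "m < j \<Longrightarrow> w j = 0"
    and parts_cover: "(\<Union>p\<in>{1..n}. P p) = {1..m}"
    and parts_disjoint: "p \<in> {1..n} \<Longrightarrow> q \<in> {1..n} \<Longrightarrow> p \<noteq> q \<Longrightarrow> P p \<inter> P q = {}"
    and parts_value: "p \<in> {1..n} \<Longrightarrow> sum w (P p) = 1"
begin

lemma part_subset: "p \<in> {1..n} \<Longrightarrow> P p \<subseteq> {1..m}"
  unfolding parts_cover[symmetric] by (rule UN_upper)

lemma finite_part: "p \<in> {1..n} \<Longrightarrow> finite (P p)"
  using part_subset finite_subset by fastforce

definition part :: "nat \<Rightarrow> nat" where
  "part j = (SOME p. p \<in> {1..n} \<and> j \<in> P p)"

lemma part_spec: "j \<in> {1..m} \<Longrightarrow> part j \<in> {1..n} \<and> j \<in> P (part j)"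
  unfolding part_def parts_cover[symmetric] by (rule someI_ex) (simp add: Bex_def)

lemma part_eqI:
  assumes "p \<in> {1..n}" and "j \<in> P p"
  shows "part j = p"
proof -
  have "part j \<in> {1..n}" "j \<in> P (part j)" using part_spec assms part_subset by blast+
  then show ?thesis using assms parts_disjoint by blast
qed

lemma sum_Union_parts: "Q \<subseteq> {1..n} \<Longrightarrow> sum w (\<Union>p\<in>Q. P p) = card Q"
proof -
  assume Q: "Q \<subseteq> {1..n}"
  have "sum w (\<Union>p\<in>Q. P p) = (\<Sum>p\<in>Q. sum w (P p))"
  proof (rule sum.UNION_disjoint)
    show "finite Q" using Q finite_subset by blast
    show "\<forall>p\<in>Q. finite (P p)" using Q finite_part by blast
    show "\<forall>p\<in>Q. \<forall>q\<in>Q. p \<noteq> q \<longrightarrow> P p \<inter> P q = {}" using Q parts_disjoint by blast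
  qed
  also have "\<dots> = (\<Sum>p\<in>Q. 1)" using Q parts_value by (intro sum.cong) auto
  also have "\<dots> = card Q" by simp
  finally show ?thesis .
qed

lemma sum_le_card_parts:
  assumes "Q \<subseteq> {1..n}" and "S \<subseteq> (\<Union>p\<in>Q. P p)"
  shows "sum w S \<le> card Q"
proof -
  have "sum w S \<le> sum w (\<Union>p\<in>Q. P p)"
  proof (rule sum_mono2)
    show "finite (\<Union>p\<in>Q. P p)" using assms(1) finite_part finite_subset by blast
    show "0 \<le> w j" if "j \<in> (\<Union>p\<in>Q. P p) - S" for j
      using that assms(1) part_subset nonneg by fastforce
  qed (use assms(2) in blast)
  then show ?thesis using sum_Union_parts[OF assms(1)] by simp
qed

lemma sum_covering_ge_n:
  assumes "finite S" and "0 \<notin> S" and "{1..m} \<subseteq> S"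
  shows "real n \<le> sum w S"
proof -
  have "sum w {1..m} \<le> sum w S"
    using assms nonneg by (intro sum_mono2) (auto simp: Suc_le_eq gr0I)
  then show ?thesis using sum_Union_parts[of "{1..n}"] parts_cover by simp
qed

lemma pair_in_part_le_one:
  assumes "p \<in> {1..n}" "i \<in> P p" "j \<in> P p" "i \<noteq> j"
  shows "w i + w j \<le> 1"
  using sum_le_card_parts[of "{p}" "{i, j}"] assms by simp

definition rest :: "nat \<Rightarrow> nat set" where
  "rest k = P (part k) - {k}"

lemma value_eq_one_minus_rest:
  assumes "k \<in> {1..m}"
  shows "w k = 1 - sum w (rest k)"
proof -
  have "part k \<in> {1..n}" "k \<in> P (part k)" using part_spec[OF assms] by auto
  then have "sum w (P (part k)) = w k + sum w (rest k)"
    unfolding rest_def using finite_part by (intro sum.remove) auto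
  then show ?thesis using parts_value \<open>part k \<in> {1..n}\<close> by simp
qed

abbreviation pair_value :: "nat \<Rightarrow> real" where
  "pair_value k \<equiv> w k + w (2*n - k + 1)"

definition heavy :: "nat \<Rightarrow> bool" where
  "heavy k \<longleftrightarrow> k \<in> {1..n} \<and> 1 < pair_value k"

lemma heavy_separates:
  assumes "heavy k" and "i \<in> {1..k}" and "j \<in> {1..2*n - k + 1}" and "i \<noteq> j"
    and "i \<le> m" and "j \<le> m"
  shows "part i \<noteq> part j"
proof
  assume same: "part i = part j"
  have "w k \<le> w i" "w (2*n - k + 1) \<le> w j" using assms(2,3) by (auto intro: antimono)
  moreover have "part i \<in> {1..n}" "i \<in> P (part i)" "j \<in> P (part i)"
    using part_spec[of i] part_spec[of j] assms(2,3,5,6) same by auto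
  then have "w i + w j \<le> 1" using assms(4) by (intro pair_in_part_le_one)
  ultimately show False using assms(1) by (simp add: heavy_def)
qed

end

(* alpha stands for 3/4 + delta, so alpha_le is delta <= 1/36. *)
locale heavy_ordered_partition = ordered_partition +
  fixes \<alpha> :: real
  assumes alpha_le: "\<alpha> \<le> 7/9"
    and irreducible_pair: "w 1 + w (2*n + 1) < \<alpha>"
    and heavy_exists: "\<exists>k. heavy k"
begin

definition lo :: nat where "lo = Min (Collect heavy)"
definition hi :: nat where "hi = Max (Collect heavy)"

lemma finite_heavy: "finite (Collect heavy)"
  by (rule finite_subset[of _ "{1..n}"]) (auto simp: heavy_def)

lemma heavy_lo: "heavy lo" and heavy_hi: "heavy hi"
  using Min_in[OF finite_heavy] Max_in[OF finite_heavy] heavy_exists by (auto simp: lo_def hi_def)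

lemma lo_le: "heavy k \<Longrightarrow> lo \<le> k" and le_hi: "heavy k \<Longrightarrow> k \<le> hi"
  using finite_heavy by (auto simp: lo_def hi_def)

lemma lo_bounds: "1 \<le> lo" "lo \<le> hi" "hi \<le> n"
  using heavy_lo heavy_hi le_hi by (auto simp: heavy_def)

lemma pair_value_le_one: "k \<in> {1..n} \<Longrightarrow> k < lo \<or> hi < k \<Longrightarrow> pair_value k \<le> 1"
  using lo_le le_hi by (force simp: heavy_def)

lemma value_plus_extra_lt: "1 \<le> k \<Longrightarrow> w k + w (2*n + 1) < \<alpha>"
  using antimono[of 1 k] irreducible_pair by simp

lemma heavy_partner_gt: "heavy k \<Longrightarrow> 1 - \<alpha> + w (2*n + 1) < w (2*n - k + 1)"
  using value_plus_extra_lt[of k] by (simp add: heavy_def)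

lemma heavy_partner_le: "heavy k \<Longrightarrow> 2*n - k + 1 \<le> m"
  using heavy_partner_gt[of k] zero_beyond[of "2*n - k + 1"] nonneg[of "2*n + 1"] alpha_le
  by (cases "2*n - k + 1 \<le> m") auto

lemma hi_le_m: "hi \<le> m"
  using heavy_partner_le[OF heavy_hi] lo_bounds by simp

lemma inj_on_part: "inj_on part {1..hi}"
proof (rule inj_onI)
  fix i j assume "i \<in> {1..hi}" "j \<in> {1..hi}" "part i = part j"
  moreover have "hi \<le> 2*n - hi + 1" "2*n - hi + 1 \<le> m" using lo_bounds heavy_partner_le[OF heavy_hi] by auto
  ultimately show "i = j" using heavy_separates[OF heavy_hi, of i j] by fastforce
qed

definition free_parts :: "nat set" where "free_parts = {1..n} - part ` {1..hi}"
definition free_goods :: "nat set" where "free_goods = (\<Union>p\<in>free_parts. P p)"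

lemma card_free_parts: "card free_parts = n - hi"
proof -
  have "part ` {1..hi} \<subseteq> {1..n}" using part_spec lo_bounds heavy_partner_le[OF heavy_hi] by force
  then show ?thesis
    using card_Diff_subset[of "part ` {1..hi}" "{1..n}"] card_image[OF inj_on_part]
    by (simp add: free_parts_def)
qed

lemma sum_free_goods: "sum w free_goods = n - hi"
  using sum_Union_parts[of free_parts] card_free_parts by (simp add: free_goods_def free_parts_def)

lemma free_goods_subset: "free_goods \<subseteq> {1..m}"
  unfolding free_goods_def free_parts_def using part_subset by blast

lemma tail_goods_free: "{hi<..2*n - hi + 1} \<subseteq> free_goods"
proof
  fix j assume j: "j \<in> {hi<..2*n - hi + 1}"
  then have jm: "j \<in> {1..m}" using heavy_partner_le[OF heavy_hi] by auto
  have "part j \<noteq> part i" if "i \<in> {1..hi}" for i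
    using heavy_separates[OF heavy_hi, of i j] that j jm lo_bounds by auto
  then have "part j \<in> free_parts" using part_spec[OF jm] by (force simp: free_parts_def)
  then show "j \<in> free_goods" using part_spec[OF jm] by (auto simp: free_goods_def)
qed

lemma partner_hi_le_third: "w (2*n - hi + 1) \<le> 1/3"
proof -
  define M where "M = {hi<..2*n - hi + 1}"
  have "\<exists>p\<in>free_parts. 3 \<le> card (M \<inter> P p)"
  proof (rule ccontr)
    assume "\<not> ?thesis"
    then have "\<And>p. p \<in> free_parts \<Longrightarrow> card (M \<inter> P p) \<le> 2" by force
    moreover have "M = (\<Union>p\<in>free_parts. M \<inter> P p)"
      using tail_goods_free by (auto simp: M_def free_goods_def)
    then have "card M \<le> (\<Sum>p\<in>free_parts. card (M \<inter> P p))"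
      by (metis card_UN_le finite_Diff finite_atLeastAtMost free_parts_def)
    ultimately have "card M \<le> 2 * card free_parts"
      using sum_mono[of free_parts "\<lambda>p. card (M \<inter> P p)" "\<lambda>_. 2"] by simp
    then show False using card_free_parts lo_bounds by (simp add: M_def)
  qed
  then obtain p where p: "p \<in> free_parts" "3 \<le> card (M \<inter> P p)" by blast
  have "3 * w (2*n - hi + 1) \<le> card (M \<inter> P p) * w (2*n - hi + 1)"
    using p(2) nonneg[of "2*n - hi + 1"] by (intro mult_right_mono) auto
  also have "\<dots> \<le> sum w (M \<inter> P p)"
    by (rule sum_bounded_below) (auto simp: M_def intro: antimono)
  also have "\<dots> \<le> 1"
    using sum_le_card_parts[of "{p}" "M \<inter> P p"] p(1) by (auto simp: free_parts_def)
  finally show ?thesis by simp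
qed

lemma extra_good_lt: "w (2*n + 1) < \<alpha> - 2/3"
  using heavy_partner_gt[OF heavy_hi] partner_hi_le_third by simp

lemma middle_pair_value_ge: "k \<in> {lo..hi} \<Longrightarrow> \<alpha> + w (2*n + 1) \<le> pair_value k"
proof -
  assume k: "k \<in> {lo..hi}"
  have "w hi \<le> w k" "w (2*n - lo + 1) \<le> w (2*n - k + 1)"
    using k lo_bounds by (auto intro: antimono)
  moreover have "1 < w hi + w (2*n - hi + 1)" using heavy_hi by (simp add: heavy_def)
  ultimately show ?thesis
    using heavy_partner_gt[OF heavy_lo] partner_hi_le_third alpha_le by simp
qed

lemma tail_pair_value_bound:
  assumes "k \<in> {hi<..n}"
  shows "3 * max (pair_value k) (\<alpha> + w (2*n + 1)) \<le> 2 + pair_value k"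
proof -
  have "w (2*n - hi + 1) \<le> w k" "w (2*n - hi + 1) \<le> w (2*n - k + 1)"
    using assms lo_bounds by (auto intro: antimono)
  moreover have "pair_value k \<le> 1" using assms lo_bounds by (intro pair_value_le_one) auto
  moreover have "3 * (\<alpha> + w (2*n + 1)) < 2 + 2 * w (2*n - hi + 1)"
    using heavy_partner_gt[OF heavy_hi] extra_good_lt alpha_le by argo
  ultimately show ?thesis by (simp add: max_def)
qed

definition middle_goods :: "nat set" where
  "middle_goods = {2*n - hi + 1..2*n - lo + 1}"

lemma middle_goods_not_free:
  "middle_goods - free_goods = (\<Union>k\<in>{lo..hi}. rest k \<inter> middle_goods)"
proof (intro equalityI subsetI)
  fix j assume j: "j \<in> middle_goods - free_goods"
  then have jm: "j \<in> {1..m}" and "hi < j"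
    using heavy_partner_le[OF heavy_lo] lo_bounds by (auto simp: middle_goods_def)
  have "part j \<notin> free_parts" using j part_spec[OF jm] by (auto simp: free_goods_def)
  then obtain k where k: "k \<in> {1..hi}" "part j = part k" using part_spec[OF jm] by (auto simp: free_parts_def)
  have "\<not> k \<le> lo"
    using heavy_separates[OF heavy_lo, of k j] k j jm \<open>hi < j\<close> lo_bounds
    by (auto simp: middle_goods_def)
  then show "j \<in> (\<Union>k\<in>{lo..hi}. rest k \<inter> middle_goods)"
    using k j part_spec[OF jm] \<open>hi < j\<close> by (auto simp: rest_def)
next
  fix j assume "j \<in> (\<Union>k\<in>{lo..hi}. rest k \<inter> middle_goods)"
  then obtain k where k: "k \<in> {lo..hi}" "j \<in> P (part k)" "j \<in> middle_goods"
    by (auto simp: rest_def)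
  have km: "k \<in> {1..m}" and "k \<in> {1..hi}"
    using k(1) lo_bounds heavy_partner_le[OF heavy_hi] by auto
  then have "part k \<notin> free_parts" by (auto simp: free_parts_def)
  moreover have "part j = part k" "part k \<in> {1..n}" using part_spec[OF km] k(2) part_eqI by auto
  ultimately show "j \<in> middle_goods - free_goods"
    using k(3) part_eqI by (auto simp: free_goods_def free_parts_def)
qed

lemma rest_disjoint:
  assumes "k \<in> {1..hi}" and "k' \<in> {1..hi}" and "k \<noteq> k'"
  shows "rest k \<inter> rest k' = {}"
proof -
  have "part k \<noteq> part k'" using inj_on_part assms by (meson inj_on_contraD)
  moreover have "part k \<in> {1..n}" "part k' \<in> {1..n}" using part_spec assms hi_le_m by auto
  ultimately show ?thesis using parts_disjoint unfolding rest_def by blast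
qed

(* Every middle good outside the free parts lies in the rest of exactly one k in lo..hi, and every
   rest is worth more than 1 - alpha + w (2n+1); there are at least as many k whose rest misses
   the middle goods as there are middle goods in free parts. *)
lemma sum_rest_ge:
  "sum w (middle_goods - free_goods) + (1 - \<alpha> + w (2*n + 1)) * card (middle_goods \<inter> free_goods)
    \<le> (\<Sum>k=lo..hi. sum w (rest k))"
proof -
  let ?t = "1 - \<alpha> + w (2*n + 1)"
  have range: "k \<in> {1..hi}" "k \<in> {1..m}" if "k \<in> {lo..hi}" for k
    using that lo_bounds hi_le_m by auto
  have "card {lo..hi} - card (middle_goods - free_goods) = card (middle_goods \<inter> free_goods)"
  proof -
    have "card {lo..hi} = card middle_goods" using lo_bounds by (simp add: middle_goods_def)
    then show ?thesis
      using card_Diff_subset_Int[of middle_goods free_goods] card_Int_Diff[of middle_goods free_goods]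
      by (simp add: middle_goods_def)
  qed
  moreover have "sum w (middle_goods - free_goods) + ?t * (card {lo..hi} - card (middle_goods - free_goods))
      \<le> (\<Sum>k=lo..hi. sum w (rest k))"
    unfolding middle_goods_not_free
  proof (rule sum_Union_plus_slack_le)
    show "finite (rest k)" if "k \<in> {lo..hi}" for k
      using finite_part part_spec range[OF that] by (simp add: rest_def)
    show "0 \<le> w j" if "k \<in> {lo..hi}" "j \<in> rest k" for k j
    proof -
      have "part k \<in> {1..n}" using part_spec range[OF that(1)] by blast
      then have "j \<in> {1..m}" using part_subset that(2) unfolding rest_def by blast
      then show ?thesis using nonneg by simp
    qed
    show "?t \<le> sum w (rest k)" if "k \<in> {lo..hi}" for k
      using value_eq_one_minus_rest[of k] value_plus_extra_lt[of k] range[OF that] by simp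
    show "0 \<le> ?t" using alpha_le nonneg[of "2*n + 1"] by simp
    show "(rest k \<inter> middle_goods) \<inter> (rest k' \<inter> middle_goods) = {}"
      if "k \<in> {lo..hi}" "k' \<in> {lo..hi}" "k \<noteq> k'" for k k'
      using rest_disjoint range that by blast
  qed auto
  ultimately show ?thesis by simp
qed

lemma middle_sum_le:
  "(\<Sum>k=lo..hi. pair_value k) \<le> (hi - lo + 1) + sum w (middle_goods \<inter> free_goods)
     - (1 - \<alpha> + w (2*n + 1)) * card (middle_goods \<inter> free_goods)"
proof -
  have "(\<Sum>k=lo..hi. w k) = (hi - lo + 1) - (\<Sum>k=lo..hi. sum w (rest k))"
    using value_eq_one_minus_rest lo_bounds hi_le_m by (simp add: sum_subtractf)
  moreover have "(\<Sum>k=lo..hi. w (2*n - k + 1)) = sum w middle_goods"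
    using sum_mirror[of lo "2*n" hi w] lo_bounds by (simp add: middle_goods_def)
  moreover have "sum w middle_goods = sum w (middle_goods - free_goods) + sum w (middle_goods \<inter> free_goods)"
    using sum.Int_Diff[of middle_goods w free_goods] by (simp add: middle_goods_def)
  ultimately show ?thesis using sum_rest_ge by (simp add: sum.distrib)
qed

lemma tail_sum_le:
  "(\<Sum>k\<in>{hi<..n}. pair_value k) + sum w (middle_goods \<inter> free_goods) \<le> n - hi"
proof -
  let ?T = "{hi<..2*n - hi}" and ?C = "middle_goods \<inter> free_goods"
  have "(\<Sum>k\<in>{hi<..n}. w (2*n - k + 1)) = sum w {n<..2*n - hi}"
  proof -
    have "2*n - (hi + 1) + 1 = 2*n - hi" using lo_bounds by simp
    then show ?thesis using sum_mirror[of "hi + 1" "2*n" n w] lo_bounds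
      by (simp add: atLeastSucAtMost_greaterThanAtMost)
  qed
  moreover have "sum w {hi<..n} + sum w {n<..2*n - hi} = sum w ?T"
  proof -
    have "?T = {hi<..n} \<union> {n<..2*n - hi}" using lo_bounds by auto
    then show ?thesis by (simp add: sum.union_disjoint[symmetric])
  qed
  moreover have "sum w ?T + sum w ?C = sum w (?T \<union> ?C)"
    using free_goods_subset by (intro sum.union_disjoint[symmetric]) (auto simp: middle_goods_def)
  moreover have "sum w (?T \<union> ?C) \<le> sum w free_goods"
  proof (rule sum_mono2)
    show "finite free_goods" using free_goods_subset finite_subset by blast
    show "?T \<union> ?C \<subseteq> free_goods" using tail_goods_free by auto
    show "0 \<le> w j" if "j \<in> free_goods - (?T \<union> ?C)" for j
      using that free_goods_subset nonneg by auto
  qed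
  ultimately show ?thesis using sum_free_goods by (simp add: sum.distrib)
qed

theorem sum_max_pair_value_le:
  "(\<Sum>k=1..n. max (pair_value k) (\<alpha> + w (2*n + 1))) \<le> n"
proof -
  define f where "f k = max (pair_value k) (\<alpha> + w (2*n + 1))" for k
  define C where "C = middle_goods \<inter> free_goods"
  let ?y = "w (2*n - hi + 1)" and ?t = "1 - \<alpha> + w (2*n + 1)"
  have split: "{1..n} = {1..<lo} \<union> {lo..hi} \<union> {hi<..n}" using lo_bounds by auto
  have "sum f {1..n} = sum f {1..<lo} + sum f {lo..hi} + sum f {hi<..n}"
    unfolding split using lo_bounds by (subst sum.union_disjoint, auto)+
  moreover have "sum f {1..<lo} \<le> lo - 1"
  proof -
    have "f k \<le> 1" if "k \<in> {1..<lo}" for k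
      using pair_value_le_one[of k] that lo_bounds extra_good_lt alpha_le by (auto simp: f_def)
    then show ?thesis using sum_mono[of "{1..<lo}" f "\<lambda>_. 1"] by simp
  qed
  moreover have "sum f {lo..hi} \<le> (hi - lo + 1) + sum w C - ?t * card C"
    using middle_pair_value_ge middle_sum_le by (simp add: f_def C_def)
  moreover have "3 * sum f {hi<..n} \<le> 2 * (n - hi) + ((n - hi) - sum w C)"
  proof -
    have "3 * sum f {hi<..n} \<le> (\<Sum>k\<in>{hi<..n}. 2 + pair_value k)"
      unfolding sum_distrib_left f_def by (intro sum_mono tail_pair_value_bound)
    then show ?thesis using tail_sum_le lo_bounds by (simp add: sum.distrib C_def)
  qed
  moreover have "2 * sum w C \<le> 3 * ?t * card C"
  proof -
    have "sum w C \<le> card C * ?y"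
      by (rule sum_bounded_above) (auto simp: C_def middle_goods_def intro: antimono)
    moreover have "card C * (2 * ?y) \<le> card C * (3 * ?t)"
      using partner_hi_le_third alpha_le nonneg[of "2*n + 1"] by (intro mult_left_mono) auto
    ultimately show ?thesis by (simp add: algebra_simps)
  qed
  ultimately show ?thesis using lo_bounds by (simp add: f_def of_nat_diff algebra_simps)
qed

end

section \<open>Invariants of approxMMS1\<close>

definition cursor_ok :: "nat \<Rightarrow> st \<Rightarrow> bool" where
  "cursor_ok n s \<longleftrightarrow> (cur s \<noteq> None \<longrightarrow> ph2 s) \<and>
     (\<forall>k. cur s = Some k \<longrightarrow> k \<in> {1..n} \<and> own s k = None)"

definition bags_ok :: "nat \<Rightarrow> nat \<Rightarrow> st \<Rightarrow> bool" where
  "bags_ok n m s \<longleftrightarrow>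
     (\<forall>k\<in>{1..n}. Bk n k \<subseteq> bag s k \<and> bag s k \<subseteq> Bk n k \<union> {2*n<..m}) \<and>
     (\<forall>k\<in>{1..n}. \<forall>k'\<in>{1..n}. k \<noteq> k' \<longrightarrow> bag s k \<inter> bag s k' = {})"

(* Used as a simp premise, the first conjunct makes the simplifier loop, so the definition is only
   accessed through owners_okI and owners_okD. *)
definition owners_ok :: "nat \<Rightarrow> (nat \<Rightarrow> nat \<Rightarrow> real) \<Rightarrow> real \<Rightarrow> st \<Rightarrow> bool" where
  "owners_ok n v \<delta> s \<longleftrightarrow>
     (\<forall>k\<in>{1..n}. \<forall>a. own s k = Some a \<longrightarrow> a \<in> {1..n} \<and> 3/4 + \<delta> \<le> val v a (bag s k)) \<and>
     inj_on (own s) {k\<in>{1..n}. own s k \<noteq> None}"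

(* g is the good added last to the bag. *)
definition padding_needed :: "nat \<Rightarrow> (nat \<Rightarrow> nat \<Rightarrow> real) \<Rightarrow> real \<Rightarrow> st \<Rightarrow> bool" where
  "padding_needed n v \<delta> s \<longleftrightarrow> (\<forall>k\<in>{1..n}. bag s k \<noteq> Bk n k \<longrightarrow>
     (\<exists>g\<in>bag s k. 2*n < g \<and> (\<forall>a\<in>{1..n}. \<not> assigned n s a \<longrightarrow> val v a (bag s k - {g}) < 3/4 + \<delta>)))"

definition invariant :: "nat \<Rightarrow> nat \<Rightarrow> (nat \<Rightarrow> nat \<Rightarrow> real) \<Rightarrow> real \<Rightarrow> st \<Rightarrow> bool" where
  "invariant n m v \<delta> s \<longleftrightarrow>
     cursor_ok n s \<and> bags_ok n m s \<and> owners_ok n v \<delta> s \<and> padding_needed n v \<delta> s"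

lemma cursor_ok_step: "step n m v \<delta> s s' \<Longrightarrow> cursor_ok n s \<Longrightarrow> cursor_ok n s'"
  by (induction rule: step.induct) (auto simp: cursor_ok_def)

lemma bags_ok_step: "step n m v \<delta> s s' \<Longrightarrow> bags_ok n m s \<Longrightarrow> bags_ok n m s'"
proof (induction rule: step.induct)
  case (phase2_add s k g)
  then show ?case unfolding bags_ok_def by (auto simp: Int_insert_left Int_insert_right)
qed (auto simp: bags_ok_def)

lemma own_step:
  assumes "step n m v \<delta> s s'" and "cursor_ok n s" and "own s k = Some b"
  shows "own s' k = Some b"
  using assms by (induction rule: step.induct) (auto simp: cursor_ok_def)

lemma assigned_step:
  assumes "step n m v \<delta> s s'" and "cursor_ok n s" and "assigned n s a"
  shows "assigned n s' a"
  using assms own_step unfolding assigned_def by blast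

lemma owners_okI:
  assumes "\<And>k a. k \<in> {1..n} \<Longrightarrow> own s k = Some a \<Longrightarrow> a \<in> {1..n} \<and> 3/4 + \<delta> \<le> val v a (bag s k)"
    and "inj_on (own s) {k\<in>{1..n}. own s k \<noteq> None}"
  shows "owners_ok n v \<delta> s"
  unfolding owners_ok_def using assms by blast

lemma owners_okD:
  assumes "owners_ok n v \<delta> s"
  shows "\<And>k a. k \<in> {1..n} \<Longrightarrow> own s k = Some a \<Longrightarrow> a \<in> {1..n} \<and> 3/4 + \<delta> \<le> val v a (bag s k)"
    and "inj_on (own s) {k\<in>{1..n}. own s k \<noteq> None}"
  using assms unfolding owners_ok_def by blast+

lemma owners_ok_assign:
  assumes "owners_ok n v \<delta> s" and "own s k = None" and "eligible n v \<delta> s k a"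
  shows "owners_ok n v \<delta> (s\<lparr>own := (own s)(k := Some a)\<rparr>)"
proof (rule owners_okI)
  let ?f = "(own s)(k := Some a)" and ?D = "{k\<in>{1..n}. own s k \<noteq> None}"
  have a: "a \<in> {1..n}" "3/4 + \<delta> \<le> val v a (bag s k)" and fresh: "Some a \<notin> own s ` ?D"
    using assms(3) by (auto simp: eligible_def assigned_def)
  have "inj_on ?f (insert k ?D)"
    using owners_okD(2)[OF assms(1)] assms(2) fresh by (intro inj_on_fun_updI) auto
  moreover have "{k'\<in>{1..n}. ?f k' \<noteq> None} \<subseteq> insert k ?D" by auto
  ultimately have "inj_on ?f {k'\<in>{1..n}. ?f k' \<noteq> None}" by (rule inj_on_subset)
  then show "inj_on (own (s\<lparr>own := ?f\<rparr>)) {k'\<in>{1..n}. own (s\<lparr>own := ?f\<rparr>) k' \<noteq> None}"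
    by simp
  fix k' b assume k': "k' \<in> {1..n}" "own (s\<lparr>own := ?f\<rparr>) k' = Some b"
  show "b \<in> {1..n} \<and> 3/4 + \<delta> \<le> val v b (bag (s\<lparr>own := ?f\<rparr>) k')"
  proof (cases "k' = k")
    case True
    then show ?thesis using k' a by simp
  next
    case False
    then have "own s k' = Some b" using k'(2) by simp
    then show ?thesis using owners_okD(1)[OF assms(1) k'(1)] by simp
  qed
qed

lemma owners_ok_cong:
  assumes "owners_ok n v \<delta> s" and "own s' = own s"
    and "\<And>k. k \<in> {1..n} \<Longrightarrow> own s k \<noteq> None \<Longrightarrow> bag s' k = bag s k"
  shows "owners_ok n v \<delta> s'"
proof (rule owners_okI)
  show "inj_on (own s') {k\<in>{1..n}. own s' k \<noteq> None}" using owners_okD(2)[OF assms(1)] assms(2) by simp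
  fix k a assume k: "k \<in> {1..n}" "own s' k = Some a"
  then have "own s k = Some a" using assms(2) by simp
  then show "a \<in> {1..n} \<and> 3/4 + \<delta> \<le> val v a (bag s' k)"
    using owners_okD(1)[OF assms(1) k(1)] assms(3)[OF k(1)] by simp
qed

lemma owners_ok_step:
  assumes "step n m v \<delta> s s'" and "cursor_ok n s" and "owners_ok n v \<delta> s"
  shows "owners_ok n v \<delta> s'"
  using assms
proof (induction rule: step.induct)
  case (phase1_assign s k a)
  then show ?case by (intro owners_ok_assign)
next
  case (phase2_assign s k a)
  then have "owners_ok n v \<delta> (s\<lparr>own := (own s)(k := Some a)\<rparr>)"
    by (intro owners_ok_assign) (auto simp: cursor_ok_def)
  then show ?case by (rule owners_ok_cong) simp_all
next
  case (to_phase2 s)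
  show ?case by (rule owners_ok_cong[OF to_phase2.prems(2)]) simp_all
next
  case (phase2_pick s k)
  show ?case by (rule owners_ok_cong[OF phase2_pick.prems(2)]) simp_all
next
  case (phase2_add s k g)
  then have "own s k = None" by (simp add: cursor_ok_def)
  then show ?case by (intro owners_ok_cong[OF phase2_add.prems(2)]) auto
qed

lemma padding_needed_mono:
  assumes "padding_needed n v \<delta> s" and "bag s' = bag s"
    and "\<And>a. assigned n s a \<Longrightarrow> assigned n s' a"
  shows "padding_needed n v \<delta> s'"
  using assms unfolding padding_needed_def by metis

lemma padding_needed_step:
  assumes "step n m v \<delta> s s'" and "cursor_ok n s" and "bags_ok n m s" and "padding_needed n v \<delta> s"
  shows "padding_needed n v \<delta> s'"
proof (cases "bag s' = bag s")
  case True
  then show ?thesis using assms padding_needed_mono assigned_step by metis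
next
  case False
  with assms(1) obtain k g where s': "s' = s\<lparr>bag := (bag s)(k := insert g (bag s k))\<rparr>"
    and k: "cur s = Some k" and "2*n < g" and g: "g \<notin> (\<Union>j\<in>{1..n}. bag s j)"
    and unwanted: "\<forall>a\<in>{1..n}. \<not> assigned n s a \<longrightarrow> val v a (bag s k) < 3/4 + \<delta>"
    by (cases rule: step.cases) (auto simp: not_le)
  have "k \<in> {1..n}" using k assms(2) by (simp add: cursor_ok_def)
  then have "insert g (bag s k) - {g} = bag s k" using g by auto
  then show ?thesis
    using assms(4) unwanted \<open>2*n < g\<close> unfolding s' padding_needed_def assigned_def by auto
qed

lemma invariant_init: "invariant n m v \<delta> (init n)"
  by (auto simp: invariant_def cursor_ok_def bags_ok_def owners_ok_def padding_needed_def init_def Bk_def)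

lemma invariant_reachable:
  assumes "(step n m v \<delta>)\<^sup>*\<^sup>* (init n) s"
  shows "invariant n m v \<delta> s"
  using assms
proof (induction rule: rtranclp_induct)
  case base
  show ?case by (rule invariant_init)
next
  case (step s s')
  then show ?case
    using cursor_ok_step bags_ok_step owners_ok_step padding_needed_step
    unfolding invariant_def by meson
qed

section \<open>The terminal state\<close>

lemma exists_eligible:
  assumes "a \<in> {1..n}" and "\<not> assigned n s a" and "3/4 + \<delta> \<le> val v a (bag s k)"
  shows "\<exists>b. eligible n v \<delta> s k b"
  using assms unfolding eligible_def N11_def N1_def by blast

lemma assigned_if_all_bags_owned:
  assumes "owners_ok n v \<delta> s" and "\<And>k. k \<in> {1..n} \<Longrightarrow> own s k \<noteq> None" and "i \<in> {1..n}"
  shows "assigned n s i"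
proof -
  define f where "f k = the (own s k)" for k
  have own_f: "own s k = Some (f k)" if "k \<in> {1..n}" for k
    using assms(2)[OF that] by (auto simp: f_def)
  have "{k\<in>{1..n}. own s k \<noteq> None} = {1..n}" using assms(2) by blast
  then have "inj_on (own s) {1..n}" using owners_okD(2)[OF assms(1)] by simp
  then have "inj_on f {1..n}" by (metis (no_types, lifting) inj_on_def own_f)
  moreover have "f ` {1..n} \<subseteq> {1..n}" using owners_okD(1)[OF assms(1)] own_f by blast
  ultimately have "f ` {1..n} = {1..n}" by (simp add: endo_inj_surj)
  then show ?thesis using assms(3) own_f unfolding assigned_def by (metis imageE)
qed

lemma terminal_state_stuck:
  assumes inv: "invariant n m v \<delta> s" and terminal: "\<nexists>s'. step n m v \<delta> s s'"
    and i: "i \<in> {1..n}" "\<not> assigned n s i"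
  obtains c where "c \<in> {1..n}"
    and "\<And>a. a \<in> {1..n} \<Longrightarrow> \<not> assigned n s a \<Longrightarrow> val v a (bag s c) < 3/4 + \<delta>"
    and "{2*n<..m} \<subseteq> (\<Union>k\<in>{1..n}. bag s k)"
proof -
  have ph2: "ph2 s"
  proof (rule ccontr)
    assume not_ph2: "\<not> ph2 s"
    show False
    proof (cases "\<exists>k\<in>{1..n}. \<exists>a\<in>{1..n}. own s k = None \<and> \<not> assigned n s a \<and> 3/4 + \<delta> \<le> val v a (bag s k)")
      case True
      then obtain k a where "k \<in> {1..n}" "own s k = None" "a \<in> {1..n}" "\<not> assigned n s a"
        "3/4 + \<delta> \<le> val v a (bag s k)" by blast
      then show False using exists_eligible step.phase1_assign[OF not_ph2] terminal by metis
    next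
      case False
      then show False using step.to_phase2[OF not_ph2] terminal by blast
    qed
  qed
  obtain c where c: "cur s = Some c"
  proof (cases "cur s")
    case None
    then have "own s k \<noteq> None" if "k \<in> {1..n}" for k
      using step.phase2_pick[OF ph2 None that] terminal by blast
    then have "assigned n s i"
      using inv i(1) assigned_if_all_bags_owned unfolding invariant_def by blast
    then show ?thesis using i(2) by blast
  qed
  have no_taker: "\<not> (\<exists>a\<in>{1..n}. \<not> assigned n s a \<and> 3/4 + \<delta> \<le> val v a (bag s c))"
    using exists_eligible step.phase2_assign[OF ph2 c] terminal by metis
  show ?thesis
  proof
    show "c \<in> {1..n}" using inv c by (simp add: invariant_def cursor_ok_def)
    show "val v a (bag s c) < 3/4 + \<delta>" if "a \<in> {1..n}" "\<not> assigned n s a" for a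
      using no_taker that by (meson not_le)
    show "{2*n<..m} \<subseteq> (\<Union>k\<in>{1..n}. bag s k)"
      using step.phase2_add[OF ph2 c no_taker] terminal by fastforce
  qed
qed

lemma finite_bags_Union:
  assumes "bags_ok n m s"
  shows "finite (\<Union>k\<in>{1..n}. bag s k)" and "0 \<notin> (\<Union>k\<in>{1..n}. bag s k)"
proof -
  have "bag s k \<subseteq> {1..m} \<union> Bk n k" if "k \<in> {1..n}" for k
  proof -
    have "bag s k \<subseteq> Bk n k \<union> {2*n<..m}" using assms that by (simp add: bags_ok_def)
    then show ?thesis by auto
  qed
  then have sub: "(\<Union>k\<in>{1..n}. bag s k) \<subseteq> {1..m} \<union> (\<Union>k\<in>{1..n}. Bk n k)" by blast
  have "finite ({1..m} \<union> (\<Union>k\<in>{1..n}. Bk n k))" by (simp add: Bk_def)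
  then show "finite (\<Union>k\<in>{1..n}. bag s k)" using sub by (rule finite_subset[rotated])
  have "0 \<notin> {1..m} \<union> (\<Union>k\<in>{1..n}. Bk n k)" by (auto simp: Bk_def)
  then show "0 \<notin> (\<Union>k\<in>{1..n}. bag s k)" using sub by blast
qed

lemma sum_bags:
  assumes "bags_ok n m s"
  shows "(\<Sum>k=1..n. val v i (bag s k)) = sum (v i) (\<Union>k\<in>{1..n}. bag s k)"
proof -
  have "finite (bag s k)" if "k \<in> {1..n}" for k
    using finite_bags_Union(1)[OF assms] that by (meson UN_upper finite_subset)
  then show ?thesis
    using assms unfolding bags_ok_def val_def by (intro sum.UNION_disjoint[symmetric]) auto
qed

lemma bags_cover_goods:
  assumes "bags_ok n m s" and "{2*n<..m} \<subseteq> (\<Union>k\<in>{1..n}. bag s k)"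
  shows "{1..m} \<subseteq> (\<Union>k\<in>{1..n}. bag s k)"
proof
  fix j assume j: "j \<in> {1..m}"
  have Bk_in: "Bk n k \<subseteq> (\<Union>k\<in>{1..n}. bag s k)" if "k \<in> {1..n}" for k
    using assms(1) that unfolding bags_ok_def by blast
  consider "j \<le> n" | "n < j" "j \<le> 2*n" | "2*n < j" by linarith
  then show "j \<in> (\<Union>k\<in>{1..n}. bag s k)"
  proof cases
    case 1
    then show ?thesis using Bk_in[of j] j by (auto simp: Bk_def)
  next
    case 2
    then have "j \<in> Bk n (2*n - j + 1)" "2*n - j + 1 \<in> {1..n}" by (auto simp: Bk_def)
    then show ?thesis using Bk_in by blast
  next
    case 3
    then show ?thesis using assms(2) j by auto
  qed
qed

lemma padded_bag_value_le:
  assumes "bags_ok n m s" and "padding_needed n v \<delta> s" and "k \<in> {1..n}"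
    and "i \<in> {1..n}" and "\<not> assigned n s i" and "\<And>g. 2*n < g \<Longrightarrow> v i g \<le> v i (2*n + 1)"
  shows "val v i (bag s k) \<le> max (val v i (Bk n k)) (3/4 + \<delta> + v i (2*n + 1))"
proof (cases "bag s k = Bk n k")
  case False
  then obtain g where g: "g \<in> bag s k" "2*n < g" "val v i (bag s k - {g}) < 3/4 + \<delta>"
    using assms(2-5) unfolding padding_needed_def by blast
  have "finite (bag s k)"
    using finite_bags_Union(1)[OF assms(1)] assms(3) by (meson UN_upper finite_subset)
  then have "val v i (bag s k) = v i g + val v i (bag s k - {g})"
    using g(1) by (simp add: val_def sum.remove)
  moreover have "v i g \<le> v i (2*n + 1)" using assms(6) g(2) .
  ultimately have "val v i (bag s k) \<le> 3/4 + \<delta> + v i (2*n + 1)" using g(3) by simp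
  then show ?thesis by (simp add: le_max_iff_disj)
qed simp

lemma val_Bk: "k \<in> {1..n} \<Longrightarrow> val v i (Bk n k) = v i k + v i (2*n - k + 1)"
  by (auto simp: val_def Bk_def)

lemma ONI_heavy_ordered_partition:
  assumes oni: "ONI n m v \<delta>" and "\<delta> \<le> 1/36" and i: "i \<in> N2 n v"
  obtains P where "heavy_ordered_partition n m (v i) P (3/4 + \<delta>)"
proof -
  have i1: "i \<in> {1..n}" and heavy: "\<exists>k\<in>{1..n}. 1 < val v i (Bk n k)"
    using i by (auto simp: N2_def N1_def not_le)
  have valid: "valid_instance n m v" and ord: "ordered n m v" and norm: "normalized n m v"
    and irr: "irreducible n v (3/4 + \<delta>)"
    using oni by (auto simp: ONI_def)
  have zero: "v i j = 0" if "m < j" for j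
    using valid i1 that by (simp add: valid_instance_def)
  have nonneg: "0 \<le> v i j" if "1 \<le> j" for j
    using valid i1 that zero[of j] by (cases "j \<le> m") (auto simp: valid_instance_def)
  have antimono: "v i k \<le> v i j" if "1 \<le> j" "j \<le> k" for j k
    using ord i1 that zero[of k] nonneg[of j] by (cases "k \<le> m") (auto simp: ordered_def)
  obtain P where cover: "(\<Union>p\<in>{1..n}. P p) = {1..m}"
    and disjoint: "\<And>p q. p \<in> {1..n} \<Longrightarrow> q \<in> {1..n} \<Longrightarrow> p \<noteq> q \<Longrightarrow> P p \<inter> P q = {}"
    and unit: "\<And>p. p \<in> {1..n} \<Longrightarrow> sum (v i) (P p) = 1"
    using norm i1 unfolding normalized_def val_def by metis
  interpret ordered_partition n m "v i" P
    by unfold_locales (use nonneg antimono zero cover disjoint unit in auto)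
  have "v i 1 + v i (2*n + 1) < 3/4 + \<delta>"
    using irr i1 by (auto simp: irreducible_def val_def)
  then have "heavy_ordered_partition n m (v i) P (3/4 + \<delta>)"
    using heavy assms(2) by unfold_locales (auto simp: heavy_def val_Bk)
  then show ?thesis by (rule that)
qed

lemma N2_agent_assigned:
  assumes "\<delta> \<le> 1/36" and "ONI n m v \<delta>" and inv: "invariant n m v \<delta> s"
    and terminal: "\<nexists>s'. step n m v \<delta> s s'" and "i \<in> N2 n v"
  shows "assigned n s i"
proof (rule ccontr)
  assume unassigned: "\<not> assigned n s i"
  have i: "i \<in> {1..n}" using assms(5) by (simp add: N2_def)
  obtain c where c: "c \<in> {1..n}" "val v i (bag s c) < 3/4 + \<delta>"
    and padded: "{2*n<..m} \<subseteq> (\<Union>k\<in>{1..n}. bag s k)"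
    using terminal_state_stuck[OF inv terminal i unassigned] i unassigned by metis
  obtain P where "heavy_ordered_partition n m (v i) P (3/4 + \<delta>)"
    using ONI_heavy_ordered_partition assms(1,2,5) by blast
  then interpret heavy_ordered_partition n m "v i" P "3/4 + \<delta>" .
  have bags: "bags_ok n m s" and padding: "padding_needed n v \<delta> s"
    using inv by (simp_all add: invariant_def)
  let ?bound = "\<lambda>k. max (pair_value k) (3/4 + \<delta> + v i (2*n + 1))"
  have "real n \<le> sum (v i) (\<Union>k\<in>{1..n}. bag s k)"
    using finite_bags_Union[OF bags] bags_cover_goods[OF bags padded] by (rule sum_covering_ge_n)
  also have "\<dots> = (\<Sum>k=1..n. val v i (bag s k))" by (rule sum_bags[OF bags, symmetric])
  also have "\<dots> < (\<Sum>k=1..n. ?bound k)"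
  proof (rule sum_strict_mono_ex1)
    show "\<forall>k\<in>{1..n}. val v i (bag s k) \<le> ?bound k"
      using padded_bag_value_le[OF bags padding _ i unassigned] antimono val_Bk by simp
    show "\<exists>k\<in>{1..n}. val v i (bag s k) < ?bound k"
      using c nonneg[of "2*n + 1"] by force
  qed simp
  also have "\<dots> \<le> n" by (rule sum_max_pair_value_le)
  finally show False by simp
qed

theorem lemma28:
  fixes n m :: nat and v :: "nat \<Rightarrow> nat \<Rightarrow> real" and \<delta> :: real and s :: st
  assumes "0 < \<delta>" and "\<delta> \<le> 0.011"
    and "ONI n m v \<delta>"
    and "real (card (N11 n v \<delta>)) \<le> real n * (1/4 - \<delta>) / (1/4 + \<delta>/3)"
    and "(step n m v \<delta>)\<^sup>*\<^sup>* (init n) s"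
    and "\<not> (\<exists>s'. step n m v \<delta> s s')"
  shows "\<forall>i\<in>N2 n v. \<exists>k\<in>{1..n}. own s k = Some i \<and> 3/4 + \<delta> \<le> val v i (bag s k)"
proof
  fix i assume "i \<in> N2 n v"
  have inv: "invariant n m v \<delta> s" using assms(5) by (rule invariant_reachable)
  have "\<delta> \<le> 1/36" using assms(2) by simp
  then have "assigned n s i"
    using N2_agent_assigned assms(3,6) inv \<open>i \<in> N2 n v\<close> by blast
  then obtain k where "k \<in> {1..n}" "own s k = Some i" by (auto simp: assigned_def)
  moreover have "owners_ok n v \<delta> s" using inv by (simp add: invariant_def)
  ultimately show "\<exists>k\<in>{1..n}. own s k = Some i \<and> 3/4 + \<delta> \<le> val v i (bag s k)"
    using owners_okD(1) by blast
qed

end
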